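(* Let $(N,h)$ be a Kähler manifold of complex dimension $n$ and $x_0\in N$. If $S_k(x_0)>0$, then the curvature is BC-$p$ positive at $x_0$ for every $p\ge k$. If $\mathrm{Ric}_k(x_0)$ is $\ell$-positive for some $\ell\le k$, then the curvature is BC-$p$ positive at $x_0$ for every $\ell\le p\le n$.
   Context: $R$ is the curvature tensor (sign convention: Fubini–Study positive), written $R_{v\bar v E\bar E}=R(v,\bar v,E,\bar E)$. The curvature is BC-$p$ positive at $x_0$ if for every unitary orthonormal set $\{E_1,\dots,E_p\}\subset T'_{x_0}N$ there exists $v\in T'_{x_0}N$ with $\sum_{i=1}^pR(v,\bar v,E_i,\bar E_i)>0$. For a $k$-dimensional complex subspace $\Sigma\subset T'_{x_0}N$ with unitary basis $E_1,\dots,E_k$: $S_k(x_0,\Sigma)=\sum_{i,j=1}^kR(E_i,\bar E_i,E_j,\bar E_j)$, and $S_k(x_0)>0$ means $S_k(x_0,\Sigma)>0$ for all such $\Sigma$; $\mathrm{Ric}_k(x_0,\Sigma)(v,\bar v)=\sum_{i=1}^kR(v,\bar v,E_i,\bar E_i)$ for $v\in\Sigma$, a Hermitian form on $\Sigma$. $\mathrm{Ric}_k(x_0)$ is $\ell$-positive if for every $k$-dimensional $\Sigma\subset T'_{x_0}N$ the sum of the $\ell$ smallest eigenvalues of the Hermitian form $\mathrm{Ric}_k(x_0,\Sigma)$ on $\Sigma$ is positive. *)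

theory Defs
  imports "Jordan_Normal_Form.Char_Poly" "HOL-Computational_Algebra.Fundamental_Theorem_Algebra"
begin

text \<open>The holomorphic tangent space T'_{x0}N is modelled as
  the space of functions 'n \<Rightarrow> complex (components w.r.t. a fixed h-unitary frame), with
  complex dimension n = CARD('n).  The metric h at x0 in that frame is the standard
  Hermitian product.  The curvature tensor at x0 is given by its components
  Rc i j k l = R(e_i, conj e_j, e_k, conj e_l).\<close>

definition herm :: "('n::finite \<Rightarrow> complex) \<Rightarrow> ('n \<Rightarrow> complex) \<Rightarrow> complex" where
  "herm u v = (\<Sum>i\<in>UNIV. u i * cnj (v i))"

definition curv :: "('n::finite \<Rightarrow> 'n \<Rightarrow> 'n \<Rightarrow> 'n \<Rightarrow> complex)
    \<Rightarrow> ('n \<Rightarrow> complex) \<Rightarrow> ('n \<Rightarrow> complex) \<Rightarrow> ('n \<Rightarrow> complex) \<Rightarrow> ('n \<Rightarrow> complex) \<Rightarrow> complex" where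
  "curv Rc X Y Z W = (\<Sum>i\<in>UNIV. \<Sum>j\<in>UNIV. \<Sum>k\<in>UNIV. \<Sum>l\<in>UNIV.
      Rc i j k l * X i * cnj (Y j) * Z k * cnj (W l))"

definition kaehler_curvature :: "('n::finite \<Rightarrow> 'n \<Rightarrow> 'n \<Rightarrow> 'n \<Rightarrow> complex) \<Rightarrow> bool" where
  "kaehler_curvature Rc \<longleftrightarrow>
     (\<forall>i j k l. Rc i j k l = Rc k j i l) \<and>
     (\<forall>i j k l. Rc i j k l = Rc i l k j) \<and>
     (\<forall>i j k l. cnj (Rc i j k l) = Rc j i l k)"

definition unitary_frame :: "nat \<Rightarrow> (nat \<Rightarrow> ('n::finite \<Rightarrow> complex)) \<Rightarrow> bool" where
  "unitary_frame p E \<longleftrightarrow> (\<forall>a<p. \<forall>b<p. herm (E a) (E b) = (if a = b then 1 else 0))"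

definition BC_positive :: "('n::finite \<Rightarrow> 'n \<Rightarrow> 'n \<Rightarrow> 'n \<Rightarrow> complex) \<Rightarrow> nat \<Rightarrow> bool" where
  "BC_positive Rc p \<longleftrightarrow>
     (\<forall>E. unitary_frame p E \<longrightarrow> (\<exists>v. (\<Sum>i<p. Re (curv Rc v v (E i) (E i))) > 0))"

text \<open>S_k(x0, Sigma) computed in a unitary basis E of Sigma.\<close>
definition S_sum :: "('n::finite \<Rightarrow> 'n \<Rightarrow> 'n \<Rightarrow> 'n \<Rightarrow> complex) \<Rightarrow> nat \<Rightarrow> (nat \<Rightarrow> ('n \<Rightarrow> complex)) \<Rightarrow> real" where
  "S_sum Rc k E = (\<Sum>i<k. \<Sum>j<k. Re (curv Rc (E i) (E i) (E j) (E j)))"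

definition S_positive :: "('n::finite \<Rightarrow> 'n \<Rightarrow> 'n \<Rightarrow> 'n \<Rightarrow> complex) \<Rightarrow> nat \<Rightarrow> bool" where
  "S_positive Rc k \<longleftrightarrow> (\<forall>E. unitary_frame k E \<longrightarrow> S_sum Rc k E > 0)"

text \<open>Matrix of the Hermitian form Ric_k(x0,Sigma) on Sigma w.r.t. the unitary basis E of Sigma.\<close>
definition Ric_matrix :: "('n::finite \<Rightarrow> 'n \<Rightarrow> 'n \<Rightarrow> 'n \<Rightarrow> complex) \<Rightarrow> nat \<Rightarrow> (nat \<Rightarrow> ('n \<Rightarrow> complex)) \<Rightarrow> complex mat" where
  "Ric_matrix Rc k E = mat k k (\<lambda>(a, b). \<Sum>i<k. curv Rc (E a) (E b) (E i) (E i))"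

definition Ric_eigenvalues :: "('n::finite \<Rightarrow> 'n \<Rightarrow> 'n \<Rightarrow> 'n \<Rightarrow> complex) \<Rightarrow> nat \<Rightarrow> (nat \<Rightarrow> ('n \<Rightarrow> complex)) \<Rightarrow> real list" where
  "Ric_eigenvalues Rc k E = sorted_list_of_multiset (image_mset Re (proots (char_poly (Ric_matrix Rc k E))))"

definition Ric_l_positive :: "('n::finite \<Rightarrow> 'n \<Rightarrow> 'n \<Rightarrow> 'n \<Rightarrow> complex) \<Rightarrow> nat \<Rightarrow> nat \<Rightarrow> bool" where
  "Ric_l_positive Rc k l \<longleftrightarrow>
     (\<forall>E. unitary_frame k E \<longrightarrow> sum_list (take l (Ric_eigenvalues Rc k E)) > 0)"

end

theory Submission
  imports Defs
begin

text \<open>If \<open>S_k > 0\<close>, then \<open>S_p > 0\<close> for every \<open>p \<ge> k\<close>: for a unitary \<open>m\<close>-frame \<open>E\<close>, average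
  \<open>S_(m-1)\<close> over two explicit families of \<open>(m - 1)\<close>-frames in the span of \<open>E\<close>, namely the
  frames obtained by deleting one \<open>E a\<close> and the orthogonal complements of unit vectors with
  pseudo-random phases; a positive combination of the two averages is a positive multiple of
  \<open>S_m(E)\<close>. Since \<open>S_p(E) = \<Sum>i. \<Sum>j. R(E i, E i, E j, E j)\<close>, some \<open>v = E i\<close> witnesses BC-\<open>p\<close>
  positivity.

  For the Ricci part, the spectral theorem shows that the sum of the first \<open>p\<close> diagonal entries
  of the Hermitian matrix of \<open>Ric_k(\<Sigma>)\<close> is at least the sum of its \<open>p\<close> smallest eigenvalues,
  which is positive as soon as the sum of the \<open>l \<le> p\<close> smallest ones is. For \<open>p = k\<close> this is
  \<open>S_k > 0\<close>; for \<open>p < k\<close> extend a \<open>p\<close>-frame to a \<open>k\<close>-frame and use the symmetry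
  \<open>R(v, v, w, w) = R(w, w, v, v)\<close>.\<close>

subsection \<open>Sesquilinear forms and orthonormal families\<close>

lemma curv_lincomb1: "curv Rc (\<lambda>x. \<Sum>a\<in>A. c a * f a x) Y Z W = (\<Sum>a\<in>A. c a * curv Rc (f a) Y Z W)"
  unfolding curv_def by (simp add: sum_distrib_left sum_distrib_right mult_ac sum.swap[of _ A])

lemma curv_lincomb2: "curv Rc X (\<lambda>x. \<Sum>a\<in>A. c a * f a x) Z W = (\<Sum>a\<in>A. cnj (c a) * curv Rc X (f a) Z W)"
  unfolding curv_def by (simp add: sum_distrib_left sum_distrib_right mult_ac sum.swap[of _ A])

lemma curv_lincomb3: "curv Rc X Y (\<lambda>x. \<Sum>a\<in>A. c a * f a x) W = (\<Sum>a\<in>A. c a * curv Rc X Y (f a) W)"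
  unfolding curv_def by (simp add: sum_distrib_left sum_distrib_right mult_ac sum.swap[of _ A])

lemma curv_lincomb4: "curv Rc X Y Z (\<lambda>x. \<Sum>a\<in>A. c a * f a x) = (\<Sum>a\<in>A. cnj (c a) * curv Rc X Y Z (f a))"
  unfolding curv_def by (simp add: sum_distrib_left sum_distrib_right mult_ac sum.swap[of _ A])

lemma curv_eq_tuple_sum:
  "curv Rc X Y Z W = (\<Sum>q\<in>UNIV. case q of (i, j, k, l) \<Rightarrow> Rc i j k l * X i * cnj (Y j) * Z k * cnj (W l))"
  unfolding curv_def
  by (simp add: sum.cartesian_product UNIV_Times_UNIV[symmetric] del: UNIV_Times_UNIV)

lemma curv_swap13:
  assumes "kaehler_curvature Rc" shows "curv Rc X Y Z W = curv Rc Z Y X W"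
proof -
  have "Rc i j k l = Rc k j i l" for i j k l using assms unfolding kaehler_curvature_def by blast
  then show ?thesis unfolding curv_eq_tuple_sum
    by (intro sum.reindex_bij_witness[of _ "\<lambda>(i,j,k,l). (k,j,i,l)" "\<lambda>(i,j,k,l). (k,j,i,l)"])
      (auto simp: mult_ac)
qed

lemma curv_swap24:
  assumes "kaehler_curvature Rc" shows "curv Rc X Y Z W = curv Rc X W Z Y"
proof -
  have "Rc i j k l = Rc i l k j" for i j k l using assms unfolding kaehler_curvature_def by blast
  then show ?thesis unfolding curv_eq_tuple_sum
    by (intro sum.reindex_bij_witness[of _ "\<lambda>(i,j,k,l). (i,l,k,j)" "\<lambda>(i,j,k,l). (i,l,k,j)"])
      (auto simp: mult_ac)
qed

lemma curv_cnj:
  assumes "kaehler_curvature Rc" shows "cnj (curv Rc X Y Z W) = curv Rc Y X W Z"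
proof -
  have "cnj (Rc i j k l) = Rc j i l k" for i j k l using assms unfolding kaehler_curvature_def by blast
  then show ?thesis unfolding curv_eq_tuple_sum cnj_sum
    by (intro sum.reindex_bij_witness[of _ "\<lambda>(i,j,k,l). (j,i,l,k)" "\<lambda>(i,j,k,l). (j,i,l,k)"])
      (auto simp: mult_ac)
qed

lemma curv_swap_pairs:
  assumes "kaehler_curvature Rc" shows "curv Rc X Y Z W = curv Rc Z W X Y"
  using curv_swap13[OF assms] curv_swap24[OF assms] by metis

definition hprod :: "'a set \<Rightarrow> ('a \<Rightarrow> complex) \<Rightarrow> ('a \<Rightarrow> complex) \<Rightarrow> complex" where
  "hprod I u v = (\<Sum>x\<in>I. u x * cnj (v x))"

definition orthonormal_on :: "'a set \<Rightarrow> nat \<Rightarrow> (nat \<Rightarrow> 'a \<Rightarrow> complex) \<Rightarrow> bool" where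
  "orthonormal_on I m F \<longleftrightarrow> (\<forall>a<m. \<forall>b<m. hprod I (F a) (F b) = (if a = b then 1 else 0))"

lemma herm_eq_hprod: "herm = hprod UNIV"
  unfolding herm_def[abs_def] hprod_def[abs_def] ..

lemma unitary_frame_iff_orthonormal_on: "unitary_frame m E \<longleftrightarrow> orthonormal_on UNIV m E"
  unfolding unitary_frame_def orthonormal_on_def herm_eq_hprod ..

lemma hprod_lincomb1: "hprod I (\<lambda>x. \<Sum>a\<in>A. c a * f a x) v = (\<Sum>a\<in>A. c a * hprod I (f a) v)"
  unfolding hprod_def by (simp add: sum_distrib_left sum_distrib_right mult_ac sum.swap[of _ I])

lemma hprod_lincomb2: "hprod I u (\<lambda>x. \<Sum>a\<in>A. c a * f a x) = (\<Sum>a\<in>A. cnj (c a) * hprod I u (f a))"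
  unfolding hprod_def by (simp add: sum_distrib_left sum_distrib_right mult_ac sum.swap[of _ I])

lemma hprod_cnj: "cnj (hprod I u v) = hprod I v u"
  unfolding hprod_def cnj_sum by (simp add: mult.commute)

lemma hprod_diff1: "hprod I (\<lambda>x. u x - v x) w = hprod I u w - hprod I v w"
  unfolding hprod_def by (simp add: sum_subtractf left_diff_distrib)

lemma hprod_diff2: "hprod I u (\<lambda>x. v x - w x) = hprod I u v - hprod I u w"
  unfolding hprod_def by (simp add: sum_subtractf right_diff_distrib)

lemma hprod_scale1: "hprod I (\<lambda>x. c * u x) v = c * hprod I u v"
  unfolding hprod_def by (simp add: sum_distrib_left mult_ac)

lemma hprod_scale2: "hprod I u (\<lambda>x. c * v x) = cnj c * hprod I u v"
  unfolding hprod_def by (simp add: sum_distrib_left mult_ac)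

lemma hprod_self: "hprod I u u = of_real (\<Sum>x\<in>I. (cmod (u x))^2)"
  unfolding hprod_def by (simp only: of_real_sum complex_norm_square)

lemma hprod_indicator1:
  assumes "finite I" "x \<in> I" shows "hprod I (\<lambda>y. if y = x then 1 else 0) v = cnj (v x)"
proof -
  have "hprod I (\<lambda>y. if y = x then 1 else 0) v = (\<Sum>y\<in>I. if y = x then cnj (v y) else 0)"
    unfolding hprod_def by (rule sum.cong) auto
  then show ?thesis using assms by simp
qed

lemma hprod_normalize:
  assumes "hprod I w w = of_real s" "s > 0"
  shows "hprod I (\<lambda>x. of_real (1 / sqrt s) * w x) (\<lambda>x. of_real (1 / sqrt s) * w x) = 1"
  unfolding hprod_scale1 hprod_scale2 assms(1) using assms(2)
  by (simp flip: of_real_mult)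

lemma orthonormal_on_snoc:
  assumes F: "orthonormal_on I n F" and w: "hprod I w w = 1" "\<forall>a<n. hprod I w (F a) = 0"
  shows "orthonormal_on I (Suc n) (F(n := w))"
  unfolding orthonormal_on_def
proof (intro allI impI)
  fix a b assume ab: "a < Suc n" "b < Suc n"
  have "hprod I (F a) w = 0" if "a < n" using w(2) hprod_cnj[of I w "F a"] that by simp
  then show "hprod I ((F(n := w)) a) ((F(n := w)) b) = (if a = b then 1 else 0)"
    using F w ab unfolding orthonormal_on_def by (auto simp: less_Suc_eq)
qed

lemma orthonormal_on_lincomb:
  assumes "orthonormal_on I m F" "b < m"
  shows "(\<Sum>a<m. c a * hprod I (F a) (F b)) = c b"
proof -
  have "(\<Sum>a<m. c a * hprod I (F a) (F b)) = (\<Sum>a<m. if a = b then c a else 0)"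
    using assms unfolding orthonormal_on_def by (intro sum.cong) auto
  then show ?thesis using assms(2) by simp
qed

lemma exists_unit_orthogonal:
  assumes I: "finite I" and F: "orthonormal_on I m F" and m: "m < card I"
  shows "\<exists>w. hprod I w w = 1 \<and> (\<forall>a<m. hprod I w (F a) = 0)"
proof -
  define r where "r = (\<lambda>x. \<Sum>a<m. (cmod (F a x))^2)"
  have "(\<Sum>x\<in>I. r x) = (\<Sum>a<m. \<Sum>x\<in>I. (cmod (F a x))^2)" unfolding r_def by (rule sum.swap)
  also have "\<dots> = (\<Sum>a<m. 1)"
  proof (rule sum.cong[OF refl])
    fix a assume "a \<in> {..<m}"
    then have "hprod I (F a) (F a) = 1" using F unfolding orthonormal_on_def by simp
    then show "(\<Sum>x\<in>I. (cmod (F a x))^2) = 1" unfolding hprod_self by (simp only: of_real_eq_1_iff)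
  qed
  finally have "(\<Sum>x\<in>I. r x) < (\<Sum>x\<in>I. 1)" using m by simp
  then obtain x where x: "x \<in> I" "r x < 1"
    by (meson not_less sum_mono)
  \<comment> \<open>Project the coordinate vector at a point \<open>x\<close> where the family has total mass below 1.\<close>
  define e where "e = (\<lambda>y. if y = x then 1 else (0::complex))"
  define g where "g = (\<lambda>y. e y - (\<Sum>a<m. cnj (F a x) * F a y))"
  have g_orth: "hprod I g (F b) = 0" if "b < m" for b
    using orthonormal_on_lincomb[OF F that] hprod_indicator1[OF I x(1)]
    unfolding g_def e_def hprod_diff1 hprod_lincomb1 by simp
  have "hprod I g g = hprod I g e - (\<Sum>a<m. cnj (cnj (F a x)) * hprod I g (F a))"
    by (subst (2) g_def) (simp only: hprod_diff2 hprod_lincomb2)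
  also have "\<dots> = g x"
    using g_orth hprod_cnj[of I e g] hprod_indicator1[OF I x(1), of g] unfolding e_def by simp
  also have "\<dots> = 1 - (\<Sum>a<m. F a x * cnj (F a x))"
    unfolding g_def e_def by (simp add: mult.commute)
  also have "(\<Sum>a<m. F a x * cnj (F a x)) = of_real (r x)"
    unfolding r_def by (simp only: of_real_sum complex_norm_square)
  finally have "hprod I g g = of_real (1 - r x)" by simp
  moreover have "1 - r x > 0" using x by simp
  ultimately have "hprod I (\<lambda>y. of_real (1 / sqrt (1 - r x)) * g y) (\<lambda>y. of_real (1 / sqrt (1 - r x)) * g y) = 1"
    by (rule hprod_normalize)
  moreover have "\<forall>a<m. hprod I (\<lambda>y. of_real (1 / sqrt (1 - r x)) * g y) (F a) = 0"
    using g_orth unfolding hprod_scale1 by simp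
  ultimately show ?thesis by blast
qed

lemma orthonormal_on_extend:
  assumes I: "finite I" and n: "n \<le> card I" and mn: "m \<le> n" and F: "orthonormal_on I m F"
  shows "\<exists>G. orthonormal_on I n G \<and> (\<forall>a<m. G a = F a)"
  using mn n
proof (induction n rule: dec_induct)
  case base
  then show ?case using F by blast
next
  case (step n)
  then obtain G where G: "orthonormal_on I n G" "\<forall>a<m. G a = F a" by auto
  obtain w where "hprod I w w = 1" "\<forall>a<n. hprod I w (G a) = 0"
    using exists_unit_orthogonal[OF I G(1)] step by auto
  then have "orthonormal_on I (Suc n) (G(n := w))" by (rule orthonormal_on_snoc[OF G(1)])
  moreover have "\<forall>a<m. (G(n := w)) a = F a" using G(2) step by simp
  ultimately show ?case by blast
qed

lemma unitary_frame_extend: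
  fixes F :: "nat \<Rightarrow> 'n::finite \<Rightarrow> complex"
  assumes "m \<le> n" "n \<le> card (UNIV :: 'n set)" "unitary_frame m F"
  shows "\<exists>G. unitary_frame n G \<and> (\<forall>a<m. G a = F a)"
  using orthonormal_on_extend[of UNIV n m F] assms unfolding unitary_frame_iff_orthonormal_on by auto

subsection \<open>Spectral theorem for Hermitian matrices\<close>

definition mat_app :: "complex mat \<Rightarrow> nat \<Rightarrow> (nat \<Rightarrow> complex) \<Rightarrow> (nat \<Rightarrow> complex)" where
  "mat_app M k v = (\<lambda>x. \<Sum>y<k. M $$ (x, y) * v y)"

definition hermitian_mat :: "complex mat \<Rightarrow> nat \<Rightarrow> bool" where
  "hermitian_mat M k \<longleftrightarrow> M \<in> carrier_mat k k \<and> (\<forall>i<k. \<forall>j<k. M $$ (i, j) = cnj (M $$ (j, i)))"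

lemma scalar_prod_eq_sum: "v \<in> carrier_vec k \<Longrightarrow> w \<in> carrier_vec k \<Longrightarrow> v \<bullet> w = (\<Sum>i<k. v $ i * w $ i)"
  unfolding scalar_prod_def by (simp add: atLeast0LessThan)

lemma orthonormal_on_unitary_mats:
  assumes f: "orthonormal_on {..<k} k f"
  defines "P \<equiv> mat k k (\<lambda>(x, a). f a x)" and "Q \<equiv> mat k k (\<lambda>(a, y). cnj (f a y))"
  shows "Q * P = 1\<^sub>m k" "P * Q = 1\<^sub>m k"
proof -
  have P: "P \<in> carrier_mat k k" and Q: "Q \<in> carrier_mat k k" unfolding P_def Q_def by auto
  show QP: "Q * P = 1\<^sub>m k"
  proof (rule eq_matI)
    fix a b assume ab: "a < dim_row (1\<^sub>m k)" "b < dim_col (1\<^sub>m k)"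
    then have "(Q * P) $$ (a, b) = hprod {..<k} (f b) (f a)"
      using P Q by (simp add: index_mult_mat scalar_prod_eq_sum Q_def P_def hprod_def mult.commute)
    also have "\<dots> = 1\<^sub>m k $$ (a, b)" using f ab unfolding orthonormal_on_def by auto
    finally show "(Q * P) $$ (a, b) = 1\<^sub>m k $$ (a, b)" .
  qed (use P Q in auto)
  show "P * Q = 1\<^sub>m k" using mat_mult_left_right_inverse[OF Q P QP] .
qed

lemma orthonormal_on_complete:
  assumes f: "orthonormal_on {..<k} k f" and xy: "x < k" "y < k"
  shows "(\<Sum>a<k. f a x * cnj (f a y)) = (if x = y then 1 else 0)"
proof -
  have "(\<Sum>a<k. f a x * cnj (f a y)) = (mat k k (\<lambda>(x, a). f a x) * mat k k (\<lambda>(a, y). cnj (f a y))) $$ (x, y)"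
    using xy by (simp add: index_mult_mat scalar_prod_eq_sum)
  then show ?thesis using orthonormal_on_unitary_mats(2)[OF f] xy by simp
qed

lemma orthonormal_on_expand:
  assumes f: "orthonormal_on {..<k} k f" and x: "x < k"
  shows "v x = (\<Sum>a<k. hprod {..<k} v (f a) * f a x)"
proof -
  have "(\<Sum>a<k. hprod {..<k} v (f a) * f a x) = (\<Sum>a<k. \<Sum>y<k. v y * (f a x * cnj (f a y)))"
    unfolding hprod_def by (simp add: sum_distrib_left sum_distrib_right mult_ac)
  also have "\<dots> = (\<Sum>y<k. v y * (\<Sum>a<k. f a x * cnj (f a y)))"
    by (subst sum.swap) (simp add: sum_distrib_left)
  also have "\<dots> = (\<Sum>y<k. if y = x then v y else 0)"
    by (rule sum.cong[OF refl]) (use orthonormal_on_complete[OF f x] in auto)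
  also have "\<dots> = v x" using x by simp
  finally show ?thesis ..
qed

lemma hprod_mat_app_adjoint:
  assumes H: "hermitian_mat M k"
  shows "hprod {..<k} (mat_app M k u) v = hprod {..<k} u (mat_app M k v)"
proof -
  have "hprod {..<k} (mat_app M k u) v = (\<Sum>y<k. \<Sum>x<k. M $$ (x, y) * u y * cnj (v x))"
    unfolding hprod_def mat_app_def by (simp only: sum_distrib_right) (rule sum.swap)
  also have "\<dots> = (\<Sum>y<k. \<Sum>x<k. u y * cnj (M $$ (y, x) * v x))"
  proof (intro sum.cong refl)
    fix x y assume "y \<in> {..<k}" "x \<in> {..<k}"
    then have "M $$ (x, y) = cnj (M $$ (y, x))" using H unfolding hermitian_mat_def lessThan_iff by blast
    then show "M $$ (x, y) * u y * cnj (v x) = u y * cnj (M $$ (y, x) * v x)" by simp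
  qed
  also have "\<dots> = hprod {..<k} u (mat_app M k v)"
    unfolding hprod_def mat_app_def cnj_sum by (simp only: sum_distrib_left complex_cnj_mult mult.assoc)
  finally show ?thesis .
qed

lemma mat_app_lincomb: "mat_app M k (\<lambda>x. \<Sum>b\<in>B. c b * g b x) x = (\<Sum>b\<in>B. c b * mat_app M k (g b) x)"
  unfolding mat_app_def sum_distrib_left by (subst sum.swap) (simp add: mult_ac)

lemma mat_app_scale: "mat_app M k (\<lambda>x. c * g x) x = c * mat_app M k g x"
  unfolding mat_app_def by (simp add: sum_distrib_left mult_ac)

lemma exists_eigenvector:
  fixes C :: "complex mat" assumes C: "C \<in> carrier_mat n n" and n: "n > 0"
  shows "\<exists>e c. c \<in> carrier_vec n \<and> c \<noteq> 0\<^sub>v n \<and> C *\<^sub>v c = e \<cdot>\<^sub>v c"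
proof -
  obtain as where as: "char_poly C = (\<Prod>a\<leftarrow>as. [:- a, 1:])" "length as = n"
    using char_poly_factorized[OF C] by auto
  then obtain e as' where "as = e # as'" using n by (cases as) auto
  then have "eigenvalue C e" using as(1) eigenvalue_root_char_poly[OF C] by simp
  then show ?thesis using C unfolding eigenvalue_def eigenvector_def by auto
qed

lemma hermitian_eigenvalue_real:
  assumes H: "hermitian_mat M k" and ev: "\<forall>x<k. mat_app M k w x = e * w x"
    and w: "hprod {..<k} w w \<noteq> 0"
  shows "cnj e = e"
proof -
  have "hprod {..<k} (mat_app M k w) w = hprod {..<k} (\<lambda>x. e * w x) w"
    using ev unfolding hprod_def by (intro sum.cong) auto
  moreover have "hprod {..<k} w (mat_app M k w) = hprod {..<k} w (\<lambda>x. e * w x)"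
    using ev unfolding hprod_def by (intro sum.cong) auto
  ultimately have "e * hprod {..<k} w w = cnj e * hprod {..<k} w w"
    using hprod_mat_app_adjoint[OF H, of w w] by (simp only: hprod_scale1 hprod_scale2)
  then show ?thesis using w by (metis mult_cancel_right)
qed

lemma sum_lessThan_split_shift:
  fixes g :: "nat \<Rightarrow> 'b::comm_monoid_add" assumes "j \<le> k"
  shows "(\<Sum>a<k. g a) = (\<Sum>a<j. g a) + (\<Sum>a<k-j. g (a + j))"
proof -
  obtain d where k: "k = j + d" using assms le_Suc_ex by blast
  have "(\<Sum>a<j + d. g a) = (\<Sum>a<j. g a) + (\<Sum>a<d. g (a + j))"
    by (induction d) (simp_all add: ac_simps)
  then show ?thesis using k by simp
qed

lemma hermitian_complement_invariant:
  assumes H: "hermitian_mat M k" and f: "orthonormal_on {..<k} k f"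
    and ev: "\<forall>i<j. \<forall>x<k. mat_app M k (f i) x = \<mu> i * f i x"
    and b: "j \<le> b" "b < k" and x: "x < k"
  shows "mat_app M k (f b) x = (\<Sum>a<k-j. hprod {..<k} (mat_app M k (f b)) (f (a + j)) * f (a + j) x)"
proof -
  have "hprod {..<k} (mat_app M k (f b)) (f a) = 0" if a: "a < j" for a
  proof -
    have "hprod {..<k} (mat_app M k (f b)) (f a) = hprod {..<k} (f b) (\<lambda>x. \<mu> a * f a x)"
      unfolding hprod_mat_app_adjoint[OF H] using ev a by (simp add: hprod_def)
    also have "\<dots> = 0"
      using f a b unfolding hprod_scale2 orthonormal_on_def by simp
    finally show ?thesis .
  qed
  then have "(\<Sum>a<j. hprod {..<k} (mat_app M k (f b)) (f a) * f a x) = 0" by simp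
  moreover have "mat_app M k (f b) x = (\<Sum>a<k. hprod {..<k} (mat_app M k (f b)) (f a) * f a x)"
    by (rule orthonormal_on_expand[OF f x])
  moreover have "(\<Sum>a<k. g a) = (\<Sum>a<j. g a) + (\<Sum>a<k-j. g (a + j))" for g :: "nat \<Rightarrow> complex"
    using b by (intro sum_lessThan_split_shift) simp
  ultimately show ?thesis by simp
qed

lemma orthonormal_on_shifted_lincomb:
  fixes c :: "nat \<Rightarrow> complex"
  assumes f: "orthonormal_on I k f" and n: "j + n \<le> k"
  defines "w \<equiv> \<lambda>x. \<Sum>b<n. c b * f (b + j) x"
  shows "\<And>i. i < j \<Longrightarrow> hprod I w (f i) = 0"
    and "hprod I w w = of_real (\<Sum>b<n. (cmod (c b))^2)"
proof -
  have f_orth: "hprod I (f a) (f b) = (if a = b then 1 else 0)" if "a < k" "b < k" for a b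
    using f that unfolding orthonormal_on_def by blast
  show "hprod I w (f i) = 0" if "i < j" for i
    unfolding w_def hprod_lincomb1 using that n by (intro sum.neutral) (simp add: f_orth)
  have coeff: "hprod I w (f (a + j)) = c a" if "a < n" for a
  proof -
    have "hprod I w (f (a + j)) = (\<Sum>b<n. if b = a then c b else 0)"
      unfolding w_def hprod_lincomb1 using that n by (intro sum.cong refl) (simp add: f_orth)
    then show ?thesis using that by simp
  qed
  have "hprod I w w = (\<Sum>b<n. cnj (c b) * hprod I w (f (b + j)))"
    by (subst (2) w_def) (simp only: hprod_lincomb2)
  also have "\<dots> = (\<Sum>b<n. c b * cnj (c b))"
    by (intro sum.cong refl) (simp add: coeff mult.commute)
  finally show "hprod I w w = of_real (\<Sum>b<n. (cmod (c b))^2)"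
    by (simp only: of_real_sum complex_norm_square)
qed

lemma mat_app_compression_eigvec:
  assumes H: "hermitian_mat M k" and f: "orthonormal_on {..<k} k f" and j: "j \<le> k"
    and ev: "\<forall>i<j. \<forall>x<k. mat_app M k (f i) x = \<mu> i * f i x"
    and c: "\<And>a. a < k - j \<Longrightarrow>
      (\<Sum>b<k-j. hprod {..<k} (mat_app M k (f (b + j))) (f (a + j)) * c b) = e * c a"
    and x: "x < k"
  shows "mat_app M k (\<lambda>x. \<Sum>b<k-j. c b * f (b + j) x) x = e * (\<Sum>b<k-j. c b * f (b + j) x)"
proof -
  let ?C = "\<lambda>a b. hprod {..<k} (mat_app M k (f (b + j))) (f (a + j))"
  have "mat_app M k (\<lambda>x. \<Sum>b<k-j. c b * f (b + j) x) x = (\<Sum>b<k-j. c b * (\<Sum>a<k-j. ?C a b * f (a + j) x))"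
    unfolding mat_app_lincomb using hermitian_complement_invariant[OF H f ev _ _ x] j
    by (intro sum.cong refl) simp
  also have "\<dots> = (\<Sum>a<k-j. (\<Sum>b<k-j. ?C a b * c b) * f (a + j) x)"
    by (simp add: sum_distrib_left sum_distrib_right mult_ac) (rule sum.swap)
  also have "\<dots> = (\<Sum>a<k-j. e * c a * f (a + j) x)"
    by (intro sum.cong refl) (simp add: c)
  also have "\<dots> = e * (\<Sum>b<k-j. c b * f (b + j) x)"
    by (simp add: sum_distrib_left mult_ac)
  finally show ?thesis .
qed

lemma hermitian_eigvec_orthogonal:
  assumes H: "hermitian_mat M k" and j: "j < k" and u: "orthonormal_on {..<k} j u"
    and ev: "\<forall>i<j. \<forall>x<k. mat_app M k (u i) x = \<mu> i * u i x"
  shows "\<exists>w e s. s > 0 \<and> hprod {..<k} w w = of_real s \<and> (\<forall>i<j. hprod {..<k} w (u i) = 0)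
           \<and> (\<forall>x<k. mat_app M k w x = e * w x)"
proof -
  let ?I = "{..<k} :: nat set"
  obtain f where f: "orthonormal_on ?I k f" and fu: "\<forall>a<j. f a = u a"
    using orthonormal_on_extend[of ?I k j u] j u by auto
  have ev_f: "\<forall>i<j. \<forall>x<k. mat_app M k (f i) x = \<mu> i * f i x" using ev fu by simp
  define n where "n = k - j"
  \<comment> \<open>An eigenvector of the compression of \<open>M\<close> to the span of \<open>f j, \<dots>, f (k - 1)\<close>.\<close>
  define C where "C = mat n n (\<lambda>(a, b). hprod ?I (mat_app M k (f (b + j))) (f (a + j)))"
  have "C \<in> carrier_mat n n" "n > 0" unfolding C_def n_def using j by auto
  then obtain e c where c: "c \<in> carrier_vec n" "c \<noteq> 0\<^sub>v n" "C *\<^sub>v c = e \<cdot>\<^sub>v c"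
    using exists_eigenvector by blast
  have c_eigen: "(\<Sum>b<n. hprod ?I (mat_app M k (f (b + j))) (f (a + j)) * c $ b) = e * c $ a" if "a < n" for a
  proof -
    have "(C *\<^sub>v c) $ a = (e \<cdot>\<^sub>v c) $ a" using c(3) by simp
    then show ?thesis using c(1) that by (simp add: C_def scalar_prod_eq_sum[of _ n] row_def)
  qed
  define w where "w = (\<lambda>x. \<Sum>b<n. c $ b * f (b + j) x)"
  define s where "s = (\<Sum>b<n. (cmod (c $ b))^2)"
  have "j + n \<le> k" unfolding n_def using j by simp
  note w = orthonormal_on_shifted_lincomb[OF f this, where c = "\<lambda>b. c $ b", folded w_def s_def]
  obtain b where "b < n" "c $ b \<noteq> 0" using c(1,2) by (metis carrier_vecD eq_vecI index_zero_vec)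
  then have "s > 0" unfolding s_def by (intro sum_pos2[of _ b]) auto
  moreover have "\<forall>i<j. hprod ?I w (u i) = 0" using w(1) fu by simp
  moreover have "\<forall>x<k. mat_app M k w x = e * w x"
    using mat_app_compression_eigvec[OF H f _ ev_f, where c = "\<lambda>b. c $ b" and e = e] c_eigen j
    unfolding w_def n_def by simp
  ultimately show ?thesis using w(2) by blast
qed

theorem hermitian_spectral:
  assumes H: "hermitian_mat M k" and j: "j \<le> k"
  shows "\<exists>u lam. orthonormal_on {..<k} j u \<and> (\<forall>i<j. \<forall>x<k. mat_app M k (u i) x = of_real (lam i) * u i x)"
  using j
proof (induction j)
  case 0
  then show ?case unfolding orthonormal_on_def by auto
next
  case (Suc j)
  then have j: "j < k" by simp
  obtain u lam where u: "orthonormal_on {..<k} j u"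
    and ev: "\<forall>i<j. \<forall>x<k. mat_app M k (u i) x = of_real (lam i) * u i x"
    using Suc.IH j by auto
  obtain w e s where s: "s > 0" "hprod {..<k} w w = of_real s"
    and w_orth: "\<forall>i<j. hprod {..<k} w (u i) = 0" and w_eigen: "\<forall>x<k. mat_app M k w x = e * w x"
    using hermitian_eigvec_orthogonal[OF H j u ev] by blast
  have "cnj e = e" using hermitian_eigenvalue_real[OF H w_eigen] s by simp
  then have e: "of_real (Re e) = e" by (simp add: complex_eq_iff)
  define w' where "w' = (\<lambda>x. of_real (1 / sqrt s) * w x)"
  have w'_eigen: "mat_app M k w' x = e * w' x" if "x < k" for x
    unfolding w'_def mat_app_scale using w_eigen that by simp
  have "hprod {..<k} w' w' = 1" unfolding w'_def by (rule hprod_normalize[OF s(2,1)])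
  moreover have "\<forall>i<j. hprod {..<k} w' (u i) = 0" using w_orth unfolding w'_def hprod_scale1 by simp
  ultimately have "orthonormal_on {..<k} (Suc j) (u(j := w'))" by (rule orthonormal_on_snoc[OF u])
  moreover have "\<forall>i<Suc j. \<forall>x<k. mat_app M k ((u(j := w')) i) x = of_real ((lam(j := Re e)) i) * (u(j := w')) i x"
    using ev w'_eigen e by (auto simp: less_Suc_eq)
  ultimately show ?case by blast
qed

lemma hermitian_entry_spectral:
  assumes u: "orthonormal_on {..<k} k u" and ev: "\<forall>i<k. \<forall>x<k. mat_app M k (u i) x = \<mu> i * u i x"
    and xy: "x < k" "y < k"
  shows "M $$ (x, y) = (\<Sum>i<k. \<mu> i * u i x * cnj (u i y))"
proof -
  have "(\<Sum>i<k. \<mu> i * u i x * cnj (u i y)) = (\<Sum>i<k. (\<Sum>z<k. M $$ (x, z) * u i z) * cnj (u i y))"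
    using ev xy unfolding mat_app_def by (intro sum.cong refl) simp
  also have "\<dots> = (\<Sum>z<k. M $$ (x, z) * (\<Sum>i<k. u i z * cnj (u i y)))"
    by (simp add: sum_distrib_left sum_distrib_right mult_ac) (rule sum.swap)
  also have "\<dots> = (\<Sum>z<k. if z = y then M $$ (x, z) else 0)"
    by (intro sum.cong refl) (use orthonormal_on_complete[OF u _ xy(2)] in auto)
  also have "\<dots> = M $$ (x, y)" using xy by simp
  finally show ?thesis ..
qed

lemma char_poly_spectral:
  assumes M: "M \<in> carrier_mat k k" and u: "orthonormal_on {..<k} k u"
    and ev: "\<forall>i<k. \<forall>x<k. mat_app M k (u i) x = \<mu> i * u i x"
  shows "char_poly M = (\<Prod>a\<leftarrow>map \<mu> [0..<k]. [:- a, 1:])"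
proof -
  define P where "P = mat k k (\<lambda>(x, i). u i x)"
  define Q where "Q = mat k k (\<lambda>(i, y). cnj (u i y))"
  define D where "D = mat k k (\<lambda>(i, j). if i = j then \<mu> i else 0)"
  have P: "P \<in> carrier_mat k k" and Q: "Q \<in> carrier_mat k k" and D: "D \<in> carrier_mat k k"
    unfolding P_def Q_def D_def by auto
  have "M = P * D * Q"
  proof (rule eq_matI)
    fix x y assume "x < dim_row (P * D * Q)" "y < dim_col (P * D * Q)"
    then have xy: "x < k" "y < k" using P Q by auto
    have "(P * D) $$ (x, i) = u i x * \<mu> i" if i: "i < k" for i
    proof -
      have "(P * D) $$ (x, i) = (\<Sum>a<k. u a x * (if a = i then \<mu> a else 0))"
        using xy i P D by (simp add: index_mult_mat scalar_prod_eq_sum P_def D_def)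
      also have "\<dots> = (\<Sum>a<k. if a = i then u a x * \<mu> a else 0)" by (intro sum.cong refl) simp
      finally show ?thesis using i by simp
    qed
    then have "(P * D * Q) $$ (x, y) = (\<Sum>i<k. \<mu> i * u i x * cnj (u i y))"
      using xy P Q D by (simp add: index_mult_mat scalar_prod_eq_sum Q_def mult_ac)
    also have "\<dots> = M $$ (x, y)" using hermitian_entry_spectral[OF u ev xy] ..
    finally show "M $$ (x, y) = (P * D * Q) $$ (x, y)" ..
  qed (use M P Q D in auto)
  moreover have "P * Q = 1\<^sub>m k" "Q * P = 1\<^sub>m k"
    unfolding P_def Q_def by (fact orthonormal_on_unitary_mats[OF u])+
  ultimately have "similar_mat_wit M D P Q"
    unfolding similar_mat_wit_def Let_def using M P Q D by auto
  then have "similar_mat M D" unfolding similar_mat_def by blast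
  then have "char_poly M = char_poly D" by (rule char_poly_similar)
  also have "char_poly D = (\<Prod>a\<leftarrow>diag_mat D. [:- a, 1:])"
    by (rule char_poly_upper_triangular[OF D]) (simp add: upper_triangular_def D_def)
  also have "diag_mat D = map \<mu> [0..<k]"
    unfolding diag_mat_def D_def by (intro nth_equalityI) auto
  finally show ?thesis .
qed

lemma proots_linear_prod: "proots (\<Prod>a\<leftarrow>as. [:- a, 1:]) = mset (as :: complex list)"
proof -
  have "proots (\<Prod>p\<leftarrow>map (\<lambda>a. [:- a, 1:]) as. p) = sum_list (map proots (map (\<lambda>a. [:- a, 1:]) as))"
    by (rule proots_prod_list) auto
  also have "\<dots> = mset as" by (induction as) (simp_all add: proots_linear_factor)
  finally show ?thesis by (simp add: comp_def)
qed

lemma hermitian_eigen_decomposition: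
  assumes H: "hermitian_mat M k"
  obtains u lam where "orthonormal_on {..<k} k u"
    and "\<And>x y. x < k \<Longrightarrow> y < k \<Longrightarrow> M $$ (x, y) = (\<Sum>i<k. of_real (lam i) * u i x * cnj (u i y))"
    and "sorted_list_of_multiset (image_mset Re (proots (char_poly M))) = sort (map lam [0..<k])"
proof -
  obtain u lam where u: "orthonormal_on {..<k} k u"
    and ev: "\<forall>i<k. \<forall>x<k. mat_app M k (u i) x = of_real (lam i) * u i x"
    using hermitian_spectral[OF H] by blast
  have "M \<in> carrier_mat k k" using H unfolding hermitian_mat_def by simp
  from char_poly_spectral[OF this u ev]
  have "proots (char_poly M) = mset (map (\<lambda>i. of_real (lam i)) [0..<k])"
    by (simp only: proots_linear_prod)
  then have "image_mset Re (proots (char_poly M)) = mset (map lam [0..<k])"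
    by (simp add: multiset.map_comp comp_def)
  then have "sorted_list_of_multiset (image_mset Re (proots (char_poly M))) = sort (map lam [0..<k])"
    by (simp only: sorted_list_of_multiset_mset)
  with that[OF u hermitian_entry_spectral[OF u ev]] show ?thesis by blast
qed

lemma sum_min_sorted_nth:
  fixes lam :: "nat \<Rightarrow> real"
  assumes l: "0 < l" "l \<le> k"
  defines "L \<equiv> sort (map lam [0..<k])"
  shows "(\<Sum>i<k. min (lam i - L ! (l - 1)) 0) = sum_list (take l L) - real l * L ! (l - 1)"
proof -
  define t where "t = L ! (l - 1)"
  define g where "g x = min (x - t) (0::real)" for x
  have len: "length L = k" and sL: "sorted L" unfolding L_def by simp_all
  have below: "L ! j \<le> t" if "j < l" for j
    unfolding t_def using that l len by (intro sorted_nth_mono[OF sL]) auto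
  have above: "t \<le> L ! j" if "l \<le> j" "j < k" for j
    unfolding t_def using that l len by (intro sorted_nth_mono[OF sL]) auto
  have "(\<Sum>i<k. g (lam i)) = sum_list (map g (map lam [0..<k]))"
    by (simp add: sum_list_sum_nth atLeast0LessThan)
  also have "\<dots> = sum_list (map g L)"
    unfolding L_def by (simp add: multiset.map_comp flip: sum_mset_sum_list)
  also have "\<dots> = (\<Sum>j<l. g (L ! j)) + (\<Sum>j<k - l. g (L ! (j + l)))"
    using len l by (simp add: sum_list_sum_nth atLeast0LessThan sum_lessThan_split_shift[of l k])
  also have "(\<Sum>j<k - l. g (L ! (j + l))) = 0"
    by (intro sum.neutral ballI) (simp add: g_def above)
  also have "(\<Sum>j<l. g (L ! j)) = (\<Sum>j<l. L ! j) - real l * t"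
    by (simp add: g_def below sum_subtractf)
  also have "(\<Sum>j<l. L ! j) = sum_list (take l L)"
    using l len by (simp add: sum_list_sum_nth atLeast0LessThan min_absorb1)
  finally show ?thesis unfolding g_def t_def by simp
qed

lemma sum_mult_weights_pos:
  fixes lam w :: "nat \<Rightarrow> real"
  assumes p: "l \<le> p" "p \<le> k"
    and w: "\<And>i. i < k \<Longrightarrow> 0 \<le> w i \<and> w i \<le> 1" and w_sum: "(\<Sum>i<k. w i) = real p"
    and pos: "sum_list (take l (sort (map lam [0..<k]))) > 0"
  shows "(\<Sum>i<k. lam i * w i) > 0"
proof -
  have "l \<noteq> 0" using pos by (intro notI) simp
  \<comment> \<open>With \<open>t\<close> the \<open>l\<close>-th smallest value of \<open>lam\<close>, \<open>lam i * w i \<ge> min (lam i - t) 0 + t * w i\<close>.\<close>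
  define t where "t = sort (map lam [0..<k]) ! (l - 1)"
  define g where "g x = min (x - t) (0::real)" for x
  have g_sum: "(\<Sum>i<k. g (lam i)) = sum_list (take l (sort (map lam [0..<k]))) - real l * t"
    unfolding g_def t_def using sum_min_sorted_nth[of l k lam] \<open>l \<noteq> 0\<close> p by simp
  have "(\<Sum>i<k. g (lam i)) \<le> 0" unfolding g_def by (intro sum_nonpos) simp
  then have "real l * t > 0" using g_sum pos by linarith
  then have "t > 0" by (simp add: zero_less_mult_iff)
  have "lam i * w i \<ge> g (lam i) + t * w i" if "i < k" for i
    using w[OF that] mult_left_mono_neg[of "w i" 1 "lam i - t"] mult_right_mono[of t "lam i" "w i"]
    by (cases "lam i \<ge> t") (auto simp: g_def algebra_simps)
  then have "(\<Sum>i<k. lam i * w i) \<ge> (\<Sum>i<k. g (lam i) + t * w i)" by (intro sum_mono) simp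
  also have "(\<Sum>i<k. g (lam i) + t * w i) = sum_list (take l (sort (map lam [0..<k]))) + (real p - real l) * t"
    by (simp add: sum.distrib g_sum w_sum algebra_simps flip: sum_distrib_left)
  finally have "(\<Sum>i<k. lam i * w i) \<ge> sum_list (take l (sort (map lam [0..<k]))) + (real p - real l) * t" .
  moreover have "(real p - real l) * t \<ge> 0" using p \<open>t > 0\<close> by simp
  ultimately show ?thesis using pos by linarith
qed

lemma orthonormal_on_partial_weights:
  assumes u: "orthonormal_on {..<k} k u" and p: "p \<le> k"
  defines "w i \<equiv> \<Sum>j<p. (cmod (u i j))^2"
  shows "\<And>i. i < k \<Longrightarrow> 0 \<le> w i \<and> w i \<le> 1" and "(\<Sum>i<k. w i) = real p"
proof -
  fix i assume i: "i < k"
  have "hprod {..<k} (u i) (u i) = 1" using u i unfolding orthonormal_on_def by simp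
  then have "(\<Sum>j<k. (cmod (u i j))^2) = 1" unfolding hprod_self by (simp only: of_real_eq_1_iff)
  moreover have "w i \<le> (\<Sum>j<k. (cmod (u i j))^2)" unfolding w_def using p by (intro sum_mono2) auto
  ultimately show "0 \<le> w i \<and> w i \<le> 1" unfolding w_def by (auto intro: sum_nonneg)
next
  have "(\<Sum>i<k. (cmod (u i j))^2) = 1" if "j < k" for j
  proof -
    have "(\<Sum>i<k. u i j * cnj (u i j)) = 1" using orthonormal_on_complete[OF u that that] by simp
    then have "of_real (\<Sum>i<k. (cmod (u i j))^2) = (1::complex)"
      by (simp only: of_real_sum complex_norm_square)
    then show ?thesis by (simp only: of_real_eq_1_iff)
  qed
  then have "(\<Sum>j<p. \<Sum>i<k. (cmod (u i j))^2) = real p" using p by simp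
  then show "(\<Sum>i<k. w i) = real p" unfolding w_def by (subst sum.swap)
qed

lemma hermitian_partial_trace_pos:
  assumes H: "hermitian_mat M k" and p: "l \<le> p" "p \<le> k"
    and pos: "sum_list (take l (sorted_list_of_multiset (image_mset Re (proots (char_poly M))))) > 0"
  shows "(\<Sum>j<p. Re (M $$ (j, j))) > 0"
proof -
  obtain u lam where u: "orthonormal_on {..<k} k u"
    and entry: "\<And>x y. x < k \<Longrightarrow> y < k \<Longrightarrow> M $$ (x, y) = (\<Sum>i<k. of_real (lam i) * u i x * cnj (u i y))"
    and sorted: "sorted_list_of_multiset (image_mset Re (proots (char_poly M))) = sort (map lam [0..<k])"
    using hermitian_eigen_decomposition[OF H] by blast
  define w where "w i = (\<Sum>j<p. (cmod (u i j))^2)" for i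
  have "Re (M $$ (j, j)) = (\<Sum>i<k. lam i * (cmod (u i j))^2)" if "j < k" for j
    unfolding entry[OF that that] mult.assoc complex_norm_square[symmetric] Re_sum
    by (simp flip: of_real_power of_real_mult)
  then have "(\<Sum>j<p. Re (M $$ (j, j))) = (\<Sum>j<p. \<Sum>i<k. lam i * (cmod (u i j))^2)"
    using p by simp
  also have "\<dots> = (\<Sum>i<k. lam i * w i)"
    unfolding w_def by (subst sum.swap) (simp add: sum_distrib_left)
  also have "\<dots> > 0"
    using sum_mult_weights_pos[OF p] orthonormal_on_partial_weights[OF u p(2), folded w_def] pos
    unfolding sorted by blast
  finally show ?thesis .
qed

subsection \<open>Subframes\<close>

definition lincomb :: "nat \<Rightarrow> (nat \<Rightarrow> 'n \<Rightarrow> complex) \<Rightarrow> (nat \<Rightarrow> complex) \<Rightarrow> 'n \<Rightarrow> complex" where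
  "lincomb m E u = (\<lambda>x. \<Sum>a<m. u a * E a x)"

lemma herm_lincomb:
  assumes "unitary_frame m E"
  shows "herm (lincomb m E u) (lincomb m E v) = (\<Sum>a<m. u a * cnj (v a))"
proof -
  have "herm (lincomb m E u) (lincomb m E v) = (\<Sum>a<m. u a * (\<Sum>b<m. cnj (v b) * herm (E a) (E b)))"
    unfolding lincomb_def herm_eq_hprod hprod_lincomb1 hprod_lincomb2 ..
  also have "\<dots> = (\<Sum>a<m. u a * cnj (v a))"
  proof (rule sum.cong[OF refl])
    fix a assume a: "a \<in> {..<m}"
    have "(\<Sum>b<m. cnj (v b) * herm (E a) (E b)) = (\<Sum>b<m. if b = a then cnj (v b) else 0)"
      using assms a unfolding unitary_frame_def by (intro sum.cong) auto
    then show "u a * (\<Sum>b<m. cnj (v b) * herm (E a) (E b)) = u a * cnj (v a)" using a by simp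
  qed
  finally show ?thesis .
qed

lemma unitary_frame_lincomb:
  assumes "unitary_frame m E"
    and "\<And>j j'. j < k \<Longrightarrow> j' < k \<Longrightarrow> (\<Sum>a<m. u j a * cnj (u j' a)) = (if j = j' then 1 else 0)"
  shows "unitary_frame k (\<lambda>j. lincomb m E (u j))"
  using assms unfolding unitary_frame_def by (simp add: herm_lincomb[OF assms(1)])

lemma curv_lincomb:
  "curv Rc (lincomb m E u1) (lincomb m E u2) (lincomb m E u3) (lincomb m E u4) =
   (\<Sum>a<m. \<Sum>b<m. \<Sum>c<m. \<Sum>d<m. u1 a * cnj (u2 b) * u3 c * cnj (u4 d) * curv Rc (E a) (E b) (E c) (E d))"
  unfolding lincomb_def curv_lincomb1 curv_lincomb2 curv_lincomb3 curv_lincomb4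
  by (simp add: sum_distrib_left mult_ac)

lemma sum_swap3:
  "(\<Sum>j\<in>J. \<Sum>a\<in>A. \<Sum>b\<in>B. g j a b) = (\<Sum>a\<in>A. \<Sum>b\<in>B. \<Sum>j\<in>J. (g j a b :: 'a::comm_monoid_add))"
  by (subst sum.swap) (simp only: sum.swap[of _ J])

lemma sum_outer_products:
  "(\<Sum>j\<in>J. \<Sum>a\<in>A. \<Sum>b\<in>B. u j a * cnj (u j b) * F a b) =
   (\<Sum>a\<in>A. \<Sum>b\<in>B. (\<Sum>j\<in>J. u j a * cnj (u j b)) * (F a b :: complex))"
  by (subst sum_swap3) (simp add: sum_distrib_right)

lemma S_sum_lincomb:
  "S_sum Rc k (\<lambda>j. lincomb m E (u j)) =
   Re (\<Sum>a<m. \<Sum>b<m. (\<Sum>j<k. u j a * cnj (u j b)) *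
        (\<Sum>c<m. \<Sum>d<m. (\<Sum>j<k. u j c * cnj (u j d)) * curv Rc (E a) (E b) (E c) (E d)))"
proof -
  let ?T = "\<lambda>a b c d. curv Rc (E a) (E b) (E c) (E d)"
  have "S_sum Rc k (\<lambda>j. lincomb m E (u j)) =
    Re (\<Sum>j<k. \<Sum>j'<k. \<Sum>a<m. \<Sum>b<m. u j a * cnj (u j b) * (\<Sum>c<m. \<Sum>d<m. u j' c * cnj (u j' d) * ?T a b c d))"
    unfolding S_sum_def curv_lincomb by (simp add: sum_distrib_left mult_ac)
  also have "(\<Sum>j<k. \<Sum>j'<k. \<Sum>a<m. \<Sum>b<m. u j a * cnj (u j b) * (\<Sum>c<m. \<Sum>d<m. u j' c * cnj (u j' d) * ?T a b c d)) =
     (\<Sum>j<k. \<Sum>a<m. \<Sum>b<m. u j a * cnj (u j b) * (\<Sum>j'<k. \<Sum>c<m. \<Sum>d<m. u j' c * cnj (u j' d) * ?T a b c d))"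
    by (rule sum.cong[OF refl], subst sum_swap3) (simp add: sum_distrib_left)
  also have "\<dots> = (\<Sum>a<m. \<Sum>b<m. (\<Sum>j<k. u j a * cnj (u j b)) * (\<Sum>c<m. \<Sum>d<m. (\<Sum>j<k. u j c * cnj (u j d)) * ?T a b c d))"
    unfolding sum_outer_products ..
  finally show ?thesis .
qed

definition skip :: "nat \<Rightarrow> nat \<Rightarrow> nat" where
  "skip a j = (if j < a then j else Suc j)"

lemma bij_betw_skip: "a < m \<Longrightarrow> bij_betw (skip a) {..<m-1} ({..<m} - {a})"
  by (rule bij_betw_byWitness[where f'="\<lambda>x. if x < a then x else x - 1"]) (auto simp: skip_def)

lemma unitary_frame_skip:
  assumes "unitary_frame m E" "a < m"
  shows "unitary_frame (m-1) (\<lambda>j. E (skip a j))"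
proof -
  have "skip a i < m" if "i < m - 1" for i
    using bij_betw_skip[OF assms(2)] that unfolding bij_betw_def by auto
  moreover have "skip a i = skip a j \<Longrightarrow> i = j" for i j
    unfolding skip_def by (auto split: if_splits)
  ultimately show ?thesis using assms(1) unfolding unitary_frame_def by metis
qed

lemma S_sum_skip:
  assumes "a < m"
  shows "S_sum Rc (m-1) (\<lambda>j. E (skip a j)) =
    (\<Sum>i\<in>{..<m} - {a}. \<Sum>j\<in>{..<m} - {a}. Re (curv Rc (E i) (E i) (E j) (E j)))"
proof -
  note reindex = sum.reindex_bij_betw[OF bij_betw_skip[OF assms]]
  have "S_sum Rc (m-1) (\<lambda>j. E (skip a j)) =
      (\<Sum>i<m-1. \<Sum>j\<in>{..<m} - {a}. Re (curv Rc (E (skip a i)) (E (skip a i)) (E j) (E j)))"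
    unfolding S_sum_def by (rule sum.cong[OF refl], rule reindex)
  also have "\<dots> = (\<Sum>i\<in>{..<m} - {a}. \<Sum>j\<in>{..<m} - {a}. Re (curv Rc (E i) (E i) (E j) (E j)))"
    by (rule reindex)
  finally show ?thesis .
qed

lemma sum_delete_one:
  fixes t :: "nat \<Rightarrow> nat \<Rightarrow> real"
  shows "(\<Sum>a<m. \<Sum>i\<in>{..<m} - {a}. \<Sum>j\<in>{..<m} - {a}. t i j) =
    (real m - 2) * (\<Sum>i<m. \<Sum>j<m. t i j) + (\<Sum>i<m. t i i)"
proof -
  have "(\<Sum>i\<in>{..<m} - {a}. \<Sum>j\<in>{..<m} - {a}. t i j) =
    (\<Sum>i<m. \<Sum>j<m. t i j) - (\<Sum>j<m. t a j) - (\<Sum>i<m. t i a) + t a a" if "a < m" for a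
    using that by (simp add: sum_diff1 sum_subtractf)
  then have "(\<Sum>a<m. \<Sum>i\<in>{..<m} - {a}. \<Sum>j\<in>{..<m} - {a}. t i j) =
     real m * (\<Sum>i<m. \<Sum>j<m. t i j) - (\<Sum>a<m. \<Sum>j<m. t a j) - (\<Sum>a<m. \<Sum>i<m. t i a) + (\<Sum>a<m. t a a)"
    by (simp add: sum.distrib sum_subtractf)
  also have "(\<Sum>a<m. \<Sum>i<m. t i a) = (\<Sum>i<m. \<Sum>j<m. t i j)" by (rule sum.swap)
  finally show ?thesis by (simp add: algebra_simps)
qed

subsection \<open>Roots of unity and a family of codimension one subframes\<close>

definition unit_root :: "nat \<Rightarrow> int \<Rightarrow> complex" where
  "unit_root N t = cis (2 * pi * of_int t / of_nat N)"

lemma unit_root_add: "unit_root N (s + t) = unit_root N s * unit_root N t"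
  unfolding unit_root_def cis_mult by (simp add: add_divide_distrib distrib_left)

lemma unit_root_cnj: "cnj (unit_root N t) = unit_root N (- t)"
  unfolding unit_root_def cis_cnj by simp

lemma unit_root_0 [simp]: "unit_root N 0 = 1"
  unfolding unit_root_def by simp

lemma unit_root_diff: "unit_root N (s - t) = unit_root N s * cnj (unit_root N t)"
  using unit_root_add[of N s "-t"] by (simp add: unit_root_cnj)

lemma unit_root_mult_cnj: "unit_root N t * cnj (unit_root N t) = 1"
  using unit_root_diff[of N t t] by simp

lemma unit_root_power: "unit_root N (int s * t) = (unit_root N t) ^ s"
  unfolding unit_root_def DeMoivre by (simp add: mult_ac)

lemma unit_root_eq_1_iff:
  assumes N: "N > 0" shows "unit_root N t = 1 \<longleftrightarrow> int N dvd t"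
proof
  assume "unit_root N t = 1"
  then have "cos (2 * pi * of_int t / of_nat N) = 1" unfolding unit_root_def
    by (metis cis.sel(1) one_complex.sel(1))
  then obtain x :: int where "2 * pi * of_int t / of_nat N = of_int x * 2 * pi"
    unfolding cos_one_2pi_int by blast
  then have "of_int t = (of_int x * of_nat N :: real)" using N by (simp add: field_simps)
  then have "t = x * int N" by (metis of_int_eq_iff of_int_mult of_int_of_nat_eq)
  then show "int N dvd t" by simp
next
  assume "int N dvd t"
  then obtain x where "t = int N * x" by (auto simp: dvd_def)
  then have "2 * pi * of_int t / of_nat N = 2 * pi * of_int x" using N by simp
  then show "unit_root N t = 1" unfolding unit_root_def by (simp add: cis_multiple_2pi)
qed

lemma sum_unit_root:
  assumes N: "N > 0" and t: "\<bar>t\<bar> < int N"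
  shows "(\<Sum>s<N. unit_root N (int s * t)) = (if t = 0 then of_nat N else 0)"
proof -
  have "(\<Sum>s<N. unit_root N (int s * t)) = (\<Sum>s<N. (unit_root N t) ^ s)" by (simp add: unit_root_power)
  also have "\<dots> = (if unit_root N t = 1 then of_nat N else (1 - (unit_root N t) ^ N) / (1 - unit_root N t))"
    by (rule sum_gp_strict)
  also have "(unit_root N t) ^ N = 1"
    using unit_root_eq_1_iff[OF N, of "int N * t"] unit_root_power[of N N t] by simp
  also have "unit_root N t = 1 \<longleftrightarrow> t = 0"
    using unit_root_eq_1_iff[OF N] t dvd_imp_le_int[of t "int N"] by fastforce
  finally show ?thesis by simp
qed

lemma pow2_sum_neq_of_less:
  assumes "a < b" "a \<le> c" "b \<le> d" shows "(2::nat)^a + 2^c \<noteq> 2^b + 2^d"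
proof
  assume eq: "(2::nat)^a + 2^c = 2^b + 2^d"
  have b: "(2::nat)^(Suc a) dvd 2^b" and d: "(2::nat)^(Suc a) dvd 2^d"
    using assms by (intro le_imp_power_dvd, simp)+
  show False
  proof (cases "a = c")
    case True
    have "(2::nat)^(Suc a) \<le> 2^b" "(2::nat)^(Suc a) \<le> 2^d" using assms by (intro power_increasing; simp)+
    moreover have "(2::nat)^(Suc a) = 2^a + 2^a" "(0::nat) < 2^a" by simp_all
    ultimately show False using eq unfolding True by linarith
  next
    case False
    then have "(2::nat)^(Suc a) dvd 2^c" using assms(2) by (intro le_imp_power_dvd) simp
    then have "(2::nat)^(Suc a) dvd 2^a" using eq b d by (metis dvd_add dvd_add_left_iff)
    then show False by (simp add: power_le_dvd)
  qed
qed

lemma pow2_sum_eq_ordered: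
  assumes "a \<le> c" "b \<le> d" "(2::nat)^a + 2^c = 2^b + 2^d" shows "a = b \<and> c = d"
proof -
  have "\<not> a < b" "\<not> b < a"
    using pow2_sum_neq_of_less[of a b c d] pow2_sum_neq_of_less[of b a d c] assms by auto
  then show ?thesis using assms(3) by simp
qed

lemma pow2_sum_eq:
  assumes "(2::int)^a + 2^c = 2^b + 2^d" shows "(a = b \<and> c = d) \<or> (a = d \<and> c = b)"
proof -
  have "int (2^a + 2^c) = int (2^b + 2^d)" using assms by simp
  then have eq: "(2::nat)^a + 2^c = 2^b + 2^d" by (simp only: of_nat_eq_iff)
  consider "a \<le> c" "b \<le> d" | "a \<le> c" "d \<le> b" | "c \<le> a" "b \<le> d" | "c \<le> a" "d \<le> b"
    by linarith
  then show ?thesis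
  proof cases
    case 1 then show ?thesis using pow2_sum_eq_ordered[of a c b d] eq by simp
  next
    case 2 then show ?thesis using pow2_sum_eq_ordered[of a c d b] eq by (simp add: add.commute)
  next
    case 3 then show ?thesis using pow2_sum_eq_ordered[of c a b d] eq by (simp add: add.commute)
  next
    case 4 then show ?thesis using pow2_sum_eq_ordered[of c a d b] eq by (simp add: add.commute)
  qed
qed

text \<open>For \<open>s < 2^(m+1)\<close> the vectors \<open>design_vec m s j\<close>, \<open>j < m - 1\<close>, are orthonormal in \<open>\<complex>^m\<close>
  and span the orthogonal complement of the unit vector \<open>(phase m s a / sqrt m)\<^sub>a\<close>
  (a discrete Fourier basis twisted by the phases). Averaged over \<open>s\<close>, the phases behave like
  independent uniformly distributed ones up to fourth moments, because \<open>2^a + 2^c = 2^b + 2^d\<close>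
  forces \<open>{a, c} = {b, d}\<close>.\<close>

definition phase :: "nat \<Rightarrow> nat \<Rightarrow> nat \<Rightarrow> complex" where
  "phase m s a = unit_root (2^(m+1)) (int s * 2^a)"

definition design_vec :: "nat \<Rightarrow> nat \<Rightarrow> nat \<Rightarrow> nat \<Rightarrow> complex" where
  "design_vec m s j a = phase m s a * unit_root m (int (Suc j) * int a) / of_real (sqrt (real m))"

definition compl_proj :: "nat \<Rightarrow> nat \<Rightarrow> nat \<Rightarrow> complex" where
  "compl_proj m a b = (if a = b then 1 else 0) - 1 / of_nat m"

lemma design_vec_mult_cnj:
  "design_vec m s j a * cnj (design_vec m s j' b) =
   phase m s a * cnj (phase m s b) * unit_root m (int (Suc j) * int a - int (Suc j') * int b) / of_nat m"
proof -
  have "of_real (sqrt (real m)) * of_real (sqrt (real m)) = (of_nat m :: complex)"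
    by (simp flip: of_real_mult)
  then show ?thesis unfolding design_vec_def unit_root_diff by (simp add: mult_ac)
qed

lemma design_vec_orthonormal:
  assumes m: "m > 0" and j: "j < m - 1" "j' < m - 1"
  shows "(\<Sum>a<m. design_vec m s j a * cnj (design_vec m s j' a)) = (if j = j' then 1 else 0)"
proof -
  have "(\<Sum>a<m. design_vec m s j a * cnj (design_vec m s j' a)) = (\<Sum>a<m. unit_root m (int a * (int j - int j'))) / of_nat m"
    unfolding design_vec_mult_cnj sum_divide_distrib phase_def unit_root_mult_cnj
    by (rule sum.cong[OF refl]) (simp add: algebra_simps)
  also have "\<dots> = (if int j - int j' = 0 then of_nat m else 0) / of_nat m"
    using j by (subst sum_unit_root[OF m]) auto
  finally show ?thesis using m by simp
qed

lemma design_vec_gram: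
  assumes m: "m > 0" and ab: "a < m" "b < m"
  shows "(\<Sum>j<m-1. design_vec m s j a * cnj (design_vec m s j b)) = phase m s a * cnj (phase m s b) * compl_proj m a b"
proof -
  define S where "S = (\<Sum>j<m-1. unit_root m (int (Suc j) * (int a - int b)))"
  have "(\<Sum>j<m. unit_root m (int j * (int a - int b))) = (\<Sum>j<Suc (m-1). unit_root m (int j * (int a - int b)))"
    using m by simp
  also have "\<dots> = 1 + S"
    unfolding S_def by (subst sum.lessThan_Suc_shift) simp
  finally have S: "S = (if a = b then of_nat m else 0) - 1"
    using sum_unit_root[OF m, of "int a - int b"] ab by auto
  have "(\<Sum>j<m-1. design_vec m s j a * cnj (design_vec m s j b)) = phase m s a * cnj (phase m s b) * S / of_nat m"
    unfolding S_def design_vec_mult_cnj sum_divide_distrib sum_distrib_left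
    by (rule sum.cong[OF refl]) (simp add: algebra_simps)
  then show ?thesis using m S unfolding compl_proj_def by (auto simp: field_simps)
qed

lemma sum_phase_fourth_moment:
  assumes N: "N = 2^(m+1)" and abcd: "a < m" "b < m" "c < m" "d < m"
  shows "(\<Sum>s<N. phase m s a * cnj (phase m s b) * phase m s c * cnj (phase m s d))
    = (if (a = b \<and> c = d) \<or> (a = d \<and> c = b) then of_nat N else 0)"
proof -
  let ?t = "(2::int)^a - 2^b + 2^c - 2^d"
  have "phase m s a * cnj (phase m s b) * phase m s c * cnj (phase m s d) = unit_root N (int s * ?t)" for s
    unfolding phase_def unit_root_cnj unit_root_add[symmetric] N by (simp add: algebra_simps)
  then have "(\<Sum>s<N. phase m s a * cnj (phase m s b) * phase m s c * cnj (phase m s d)) = (\<Sum>s<N. unit_root N (int s * ?t))"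
    by simp
  also have "\<dots> = (if ?t = 0 then of_nat N else 0)"
  proof (rule sum_unit_root)
    have "(2::int)^x < 2^m" if "x < m" for x using that by (simp add: power_strict_increasing)
    then have "(2::int)^a < 2^m" "(2::int)^b < 2^m" "(2::int)^c < 2^m" "(2::int)^d < 2^m"
      using abcd by simp_all
    moreover have "(2::int)^(m+1) = 2 * 2^m" by simp
    ultimately have "(2::int)^a + 2^c < 2^(m+1)" "(2::int)^b + 2^d < 2^(m+1)" by linarith+
    moreover have "(2::int)^a > 0" "(2::int)^b > 0" "(2::int)^c > 0" "(2::int)^d > 0" by simp_all
    moreover have "int N = (2::int)^(m+1)" using N by simp
    ultimately show "\<bar>?t\<bar> < int N" unfolding abs_less_iff by linarith
  qed (simp add: N)
  also have "?t = 0 \<longleftrightarrow> (a = b \<and> c = d) \<or> (a = d \<and> c = b)"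
    using pow2_sum_eq[of a c b d] by (auto simp: algebra_simps)
  finally show ?thesis by simp
qed

lemma sum_pairing_diag:
  fixes m :: nat
  shows "(\<Sum>a<m. \<Sum>b<m. \<Sum>c<m. \<Sum>d<m. if a = b \<and> c = d then X a b c d else (0::complex)) = (\<Sum>a<m. \<Sum>c<m. X a a c c)"
proof -
  have "(\<Sum>a<m. \<Sum>b<m. \<Sum>c<m. \<Sum>d<m. if a = b \<and> c = d then X a b c d else (0::complex)) =
        (\<Sum>a<m. \<Sum>b<m. if a = b then (\<Sum>c<m. \<Sum>d<m. if c = d then X a b c d else 0) else 0)"
    by (intro sum.cong refl) auto
  also have "\<dots> = (\<Sum>a<m. \<Sum>c<m. \<Sum>d<m. if c = d then X a a c d else 0)"
    by (rule sum.cong[OF refl]) (simp add: sum.delta sum.delta')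
  also have "\<dots> = (\<Sum>a<m. \<Sum>c<m. X a a c c)"
    by (rule sum.cong[OF refl], rule sum.cong[OF refl]) (simp add: sum.delta sum.delta')
  finally show ?thesis .
qed

lemma sum_pairing_cross:
  fixes m :: nat
  shows "(\<Sum>a<m. \<Sum>b<m. \<Sum>c<m. \<Sum>d<m. if a = d \<and> c = b \<and> a \<noteq> b then X a b c d else (0::complex)) =
   (\<Sum>a<m. \<Sum>c<m. if a \<noteq> c then X a c c a else 0)"
proof -
  have delta1: "(\<Sum>d<m. if a = d \<and> P then f d else (0::complex)) = (if a < m \<and> P then f a else 0)"
    and delta2: "(\<Sum>d<m. if d = a \<and> P then f d else (0::complex)) = (if a < m \<and> P then f a else 0)"
    for a P and f :: "nat \<Rightarrow> complex" by (cases P; simp)+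
  have "(\<Sum>a<m. \<Sum>b<m. \<Sum>c<m. \<Sum>d<m. if a = d \<and> c = b \<and> a \<noteq> b then X a b c d else (0::complex)) =
        (\<Sum>a<m. \<Sum>b<m. \<Sum>c<m. if a < m \<and> (c = b \<and> a \<noteq> b) then X a b c a else 0)"
    by (simp only: delta1)
  also have "\<dots> = (\<Sum>a<m. \<Sum>b<m. \<Sum>c<m. if c = b \<and> a \<noteq> b then X a b c a else 0)"
    by (intro sum.cong refl) simp
  also have "\<dots> = (\<Sum>a<m. \<Sum>b<m. if b < m \<and> a \<noteq> b then X a b b a else 0)"
    by (simp only: delta2)
  also have "\<dots> = (\<Sum>a<m. \<Sum>b<m. if a \<noteq> b then X a b b a else 0)"
    by (intro sum.cong refl) simp
  finally show ?thesis .
qed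

lemma sum_pairings:
  fixes m :: nat
  shows "(\<Sum>a<m. \<Sum>b<m. \<Sum>c<m. \<Sum>d<m. if (a = b \<and> c = d) \<or> (a = d \<and> c = b) then X a b c d else (0::complex)) =
   (\<Sum>a<m. \<Sum>c<m. X a a c c) + (\<Sum>a<m. \<Sum>c<m. if a \<noteq> c then X a c c a else 0)"
proof -
  have split: "(if (a = b \<and> c = d) \<or> (a = d \<and> c = b) then x else 0) =
    (if a = b \<and> c = d then x else 0) + (if a = d \<and> c = b \<and> a \<noteq> b then x else (0::complex))" for a b c d x
    by auto
  show ?thesis unfolding split sum.distrib sum_pairing_diag sum_pairing_cross ..
qed

lemma sum_swap5:
  "(\<Sum>s\<in>S. \<Sum>a\<in>A. \<Sum>b\<in>B. \<Sum>c\<in>C. \<Sum>d\<in>D. g s a b c d) =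
   (\<Sum>a\<in>A. \<Sum>b\<in>B. \<Sum>c\<in>C. \<Sum>d\<in>D. \<Sum>s\<in>S. (g s a b c d :: 'a::comm_monoid_add))"
  by (subst sum.swap, rule sum.cong[OF refl], subst sum.swap, rule sum.cong[OF refl],
      subst sum.swap, rule sum.cong[OF refl], rule sum.swap)

lemma S_sum_design:
  assumes m: "m > 0"
  shows "S_sum Rc (m-1) (\<lambda>j. lincomb m E (design_vec m s j)) =
    Re (\<Sum>a<m. \<Sum>b<m. \<Sum>c<m. \<Sum>d<m. phase m s a * cnj (phase m s b) * phase m s c * cnj (phase m s d) *
        (compl_proj m a b * compl_proj m c d * curv Rc (E a) (E b) (E c) (E d)))"
proof -
  have gram: "(\<Sum>j<m - 1. design_vec m s j a * cnj (design_vec m s j b)) = phase m s a * cnj (phase m s b) * compl_proj m a b"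
    if "a \<in> {..<m}" "b \<in> {..<m}" for a b using design_vec_gram[OF m] that by simp
  show ?thesis unfolding S_sum_lincomb
    by (simp only: gram cong: sum.cong) (simp add: sum_distrib_left mult_ac)
qed

lemma sum_S_sum_design:
  fixes E :: "nat \<Rightarrow> 'n::finite \<Rightarrow> complex"
  assumes K: "kaehler_curvature Rc" and m: "m > 0" and N: "N = 2^(m+1)"
  defines "S \<equiv> (\<Sum>a<m. \<Sum>c<m. Re (curv Rc (E a) (E a) (E c) (E c)))"
    and "D \<equiv> (\<Sum>a<m. Re (curv Rc (E a) (E a) (E a) (E a)))"
  shows "(\<Sum>s<N. S_sum Rc (m-1) (\<lambda>j. lincomb m E (design_vec m s j))) =
    real N * ((1 - 1 / real m)^2 * S + (S - D) / (real m)^2)"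
proof -
  define T where "T a b c d = curv Rc (E a) (E b) (E c) (E d)" for a b c d
  define X where "X a b c d = compl_proj m a b * compl_proj m c d * T a b c d" for a b c d
  have "(\<Sum>s<N. \<Sum>a<m. \<Sum>b<m. \<Sum>c<m. \<Sum>d<m. phase m s a * cnj (phase m s b) * phase m s c * cnj (phase m s d) * X a b c d)
     = (\<Sum>a<m. \<Sum>b<m. \<Sum>c<m. \<Sum>d<m. if (a = b \<and> c = d) \<or> (a = d \<and> c = b) then of_nat N * X a b c d else 0)"
    by (subst sum_swap5, simp only: sum_distrib_right[symmetric])
      (intro sum.cong refl, simp add: sum_phase_fourth_moment[OF N])
  also have "\<dots> = of_nat N * ((\<Sum>a<m. \<Sum>c<m. X a a c c) + (\<Sum>a<m. \<Sum>c<m. if a \<noteq> c then X a c c a else 0))"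
    unfolding sum_pairings by (simp add: sum_distrib_left distrib_left if_distrib cong: if_cong)
  also have "(\<Sum>a<m. \<Sum>c<m. X a a c c) = of_real ((1 - 1 / real m)^2) * (\<Sum>a<m. \<Sum>c<m. T a a c c)"
    unfolding X_def compl_proj_def by (simp add: sum_distrib_left mult_ac power2_eq_square)
  also have "(\<Sum>a<m. \<Sum>c<m. if a \<noteq> c then X a c c a else 0) =
      of_real (1 / (real m)^2) * ((\<Sum>a<m. \<Sum>c<m. T a a c c) - (\<Sum>a<m. T a a a a))"
  proof -
    \<comment> \<open>\<open>T a c c a = T a a c c\<close> by the Kaehler symmetry exchanging the antiholomorphic slots.\<close>
    have "(if a \<noteq> c then X a c c a else 0) =
      of_real (1 / (real m)^2) * T a a c c - (if a = c then of_real (1 / (real m)^2) * T a a c c else 0)"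
      for a c using curv_swap24[OF K] unfolding X_def T_def compl_proj_def by (auto simp: power2_eq_square)
    then show ?thesis by (simp add: sum_subtractf sum_distrib_left right_diff_distrib)
  qed
  finally have eq: "(\<Sum>s<N. \<Sum>a<m. \<Sum>b<m. \<Sum>c<m. \<Sum>d<m. phase m s a * cnj (phase m s b) * phase m s c * cnj (phase m s d) * X a b c d)
     = of_nat N * (of_real ((1 - 1 / real m)^2) * (\<Sum>a<m. \<Sum>c<m. T a a c c) +
         of_real (1 / (real m)^2) * ((\<Sum>a<m. \<Sum>c<m. T a a c c) - (\<Sum>a<m. T a a a a)))" .
  have "(\<Sum>s<N. S_sum Rc (m-1) (\<lambda>j. lincomb m E (design_vec m s j))) =
    Re (\<Sum>s<N. \<Sum>a<m. \<Sum>b<m. \<Sum>c<m. \<Sum>d<m. phase m s a * cnj (phase m s b) * phase m s c * cnj (phase m s d) * X a b c d)"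
    unfolding S_sum_design[OF m] X_def T_def Re_sum ..
  also have "\<dots> = real N * ((1 - 1 / real m)^2 * S + (S - D) / (real m)^2)"
    unfolding eq S_def D_def T_def by (simp add: Re_sum algebra_simps diff_divide_distrib)
  finally show ?thesis .
qed

subsection \<open>BC-\<open>p\<close> positivity\<close>

lemma exists_pos_of_sum_pos:
  fixes f :: "'a \<Rightarrow> real" assumes "(\<Sum>i\<in>A. f i) > 0" shows "\<exists>i\<in>A. f i > 0"
  using sum_nonpos[of A f] assms by (meson not_less)

text \<open>Summed over the \<open>m\<close> subframes obtained by deleting one vector, \<open>S_(m-1)\<close> gives
  \<open>(m - 2) S + D\<close>, where \<open>D\<close> is the diagonal part of \<open>S = S_m(E)\<close>; averaged over the complements of
  the phase vectors it gives \<open>((m - 1)^2 S + S - D) / m^2\<close>. Adding the two cancels \<open>D\<close>.\<close>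

lemma S_sum_pos_step:
  fixes E :: "nat \<Rightarrow> 'n::finite \<Rightarrow> complex"
  assumes K: "kaehler_curvature Rc" and m: "m \<ge> 2"
    and pos: "\<And>F :: nat \<Rightarrow> 'n \<Rightarrow> complex. unitary_frame (m-1) F \<Longrightarrow> S_sum Rc (m-1) F > 0"
    and E: "unitary_frame m E"
  shows "S_sum Rc m E > 0"
proof -
  define S where "S = (\<Sum>a<m. \<Sum>c<m. Re (curv Rc (E a) (E a) (E c) (E c)))"
  define D where "D = (\<Sum>a<m. Re (curv Rc (E a) (E a) (E a) (E a)))"
  define N :: nat where "N = 2^(m+1)"
  have "m > 0" "N > 0" using m unfolding N_def by simp_all
  have "S_sum Rc (m-1) (\<lambda>j. E (skip a j)) > 0" if "a < m" for a
    using pos[OF unitary_frame_skip[OF E that]] .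
  then have "(\<Sum>a<m. S_sum Rc (m-1) (\<lambda>j. E (skip a j))) > 0"
    using \<open>m > 0\<close> by (intro sum_pos) auto
  moreover have "(\<Sum>a<m. S_sum Rc (m-1) (\<lambda>j. E (skip a j))) =
      (\<Sum>a<m. \<Sum>i\<in>{..<m} - {a}. \<Sum>j\<in>{..<m} - {a}. Re (curv Rc (E i) (E i) (E j) (E j)))"
    by (rule sum.cong[OF refl], rule S_sum_skip) simp
  then have "(\<Sum>a<m. S_sum Rc (m-1) (\<lambda>j. E (skip a j))) = (real m - 2) * S + D"
    unfolding S_def D_def sum_delete_one .
  ultimately have skip_pos: "(real m - 2) * S + D > 0" by simp
  have "unitary_frame (m-1) (\<lambda>j. lincomb m E (design_vec m s j))" for s
    by (rule unitary_frame_lincomb[OF E]) (simp add: design_vec_orthonormal[OF \<open>m > 0\<close>])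
  then have "S_sum Rc (m-1) (\<lambda>j. lincomb m E (design_vec m s j)) > 0" for s by (rule pos)
  then have "(\<Sum>s<N. S_sum Rc (m-1) (\<lambda>j. lincomb m E (design_vec m s j))) > 0"
    using \<open>N > 0\<close> by (intro sum_pos) auto
  then have "real N * ((1 - 1 / real m)^2 * S + (S - D) / (real m)^2) > 0"
    unfolding sum_S_sum_design[OF K \<open>m > 0\<close> N_def] S_def D_def .
  then have "(real m)^2 * ((1 - 1 / real m)^2 * S + (S - D) / (real m)^2) > 0"
    using \<open>m > 0\<close> by (simp add: zero_less_mult_iff)
  moreover have "(real m)^2 * ((1 - 1 / real m)^2 * S + (S - D) / (real m)^2) = (real m - 1)^2 * S + S - D"
    using \<open>m > 0\<close> by (simp add: field_simps power2_eq_square)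
  ultimately have design_pos: "(real m - 1)^2 * S + S - D > 0" by simp
  have "((real m - 1)^2 + real m - 1) * S > 0" using skip_pos design_pos by (simp add: algebra_simps)
  moreover have "(real m - 1)^2 + real m - 1 > 0"
    using m zero_le_power2[of "real m - 1"] by linarith
  ultimately have "S > 0" by (simp add: zero_less_mult_iff)
  then show ?thesis unfolding S_sum_def S_def .
qed

lemma S_sum_pos_of_S_positive:
  assumes K: "kaehler_curvature Rc" and k: "k \<ge> 1" and Sk: "S_positive Rc k" and p: "k \<le> p"
    and E: "unitary_frame p E"
  shows "S_sum Rc p E > 0"
  using p E
proof (induction p arbitrary: E rule: dec_induct)
  case base
  then show ?case using Sk unfolding S_positive_def by blast
next
  case (step n)
  show ?case by (rule S_sum_pos_step[OF K]) (use step k in auto)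
qed

lemma BC_positive_of_S_sum_pos:
  assumes "\<And>E. unitary_frame p E \<Longrightarrow> S_sum Rc p E > 0"
  shows "BC_positive Rc p"
  unfolding BC_positive_def
proof (intro allI impI)
  fix E :: "nat \<Rightarrow> 'a \<Rightarrow> complex" assume "unitary_frame p E"
  then have "(\<Sum>i<p. \<Sum>j<p. Re (curv Rc (E i) (E i) (E j) (E j))) > 0"
    using assms unfolding S_sum_def by blast
  then obtain i where "(\<Sum>j<p. Re (curv Rc (E i) (E i) (E j) (E j))) > 0"
    using exists_pos_of_sum_pos by blast
  then show "\<exists>v. (\<Sum>i<p. Re (curv Rc v v (E i) (E i))) > 0" by blast
qed

lemma BC_positive_of_S_positive:
  assumes "kaehler_curvature Rc" "k \<ge> 1" "S_positive Rc k" "k \<le> p"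
  shows "BC_positive Rc p"
  using BC_positive_of_S_sum_pos S_sum_pos_of_S_positive[OF assms] by blast

lemma Ric_matrix_entry:
  "a < k \<Longrightarrow> b < k \<Longrightarrow> Ric_matrix Rc k E $$ (a, b) = (\<Sum>i<k. curv Rc (E a) (E b) (E i) (E i))"
  unfolding Ric_matrix_def by simp

lemma Ric_matrix_hermitian:
  assumes K: "kaehler_curvature Rc" shows "hermitian_mat (Ric_matrix Rc k E) k"
  unfolding hermitian_mat_def
proof (intro conjI allI impI)
  show "Ric_matrix Rc k E \<in> carrier_mat k k" unfolding Ric_matrix_def by simp
  fix a b assume ab: "a < k" "b < k"
  show "Ric_matrix Rc k E $$ (a, b) = cnj (Ric_matrix Rc k E $$ (b, a))"
    unfolding Ric_matrix_entry[OF ab] Ric_matrix_entry[OF ab(2,1)] cnj_sum curv_cnj[OF K] ..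
qed

lemma Ric_partial_sum_pos:
  assumes K: "kaehler_curvature Rc" and R: "Ric_l_positive Rc k l"
    and F: "unitary_frame k F" and p: "l \<le> p" "p \<le> k"
  shows "(\<Sum>j<p. \<Sum>i<k. Re (curv Rc (F j) (F j) (F i) (F i))) > 0"
proof -
  have "(\<Sum>j<p. Re (Ric_matrix Rc k F $$ (j, j))) > 0"
    using hermitian_partial_trace_pos[OF Ric_matrix_hermitian[OF K] p] R F
    unfolding Ric_l_positive_def Ric_eigenvalues_def by blast
  then show ?thesis using p by (simp add: Ric_matrix_entry Re_sum)
qed

lemma BC_positive_of_Ric_l_positive:
  fixes Rc :: "'n::finite \<Rightarrow> 'n \<Rightarrow> 'n \<Rightarrow> 'n \<Rightarrow> complex"
  assumes K: "kaehler_curvature Rc" and k: "1 \<le> k" "k \<le> card (UNIV :: 'n set)"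
    and R: "Ric_l_positive Rc k l" and p: "l \<le> p" "p \<le> card (UNIV :: 'n set)" and lk: "l \<le> k"
  shows "BC_positive Rc p"
proof (cases "k \<le> p")
  case True
  have "S_positive Rc k"
    unfolding S_positive_def S_sum_def using Ric_partial_sum_pos[OF K R _ lk order_refl] by blast
  then show ?thesis using BC_positive_of_S_positive[OF K k(1) _ True] by blast
next
  case False
  show ?thesis unfolding BC_positive_def
  proof (intro allI impI)
    fix E :: "nat \<Rightarrow> 'n \<Rightarrow> complex" assume E: "unitary_frame p E"
    obtain F where F: "unitary_frame k F" "\<forall>a<p. F a = E a"
      using unitary_frame_extend[OF _ k(2) E] False by auto
    have "(\<Sum>j<p. \<Sum>i<k. Re (curv Rc (F j) (F j) (F i) (F i))) > 0"
      using Ric_partial_sum_pos[OF K R F(1) p(1)] False by simp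
    also have "\<dots> = (\<Sum>i<k. \<Sum>j<p. Re (curv Rc (F j) (F j) (F i) (F i)))" by (rule sum.swap)
    also have "\<dots> = (\<Sum>i<k. \<Sum>j<p. Re (curv Rc (F i) (F i) (E j) (E j)))"
    proof (intro sum.cong refl)
      fix i j assume "j \<in> {..<p}"
      then have "F j = E j" using F(2) by simp
      then show "Re (curv Rc (F j) (F j) (F i) (F i)) = Re (curv Rc (F i) (F i) (E j) (E j))"
        using curv_swap_pairs[OF K, of "F i" "F i" "E j" "E j"] by simp
    qed
    finally obtain i where "(\<Sum>j<p. Re (curv Rc (F i) (F i) (E j) (E j))) > 0"
      using exists_pos_of_sum_pos by blast
    then show "\<exists>v. (\<Sum>i<p. Re (curv Rc v v (E i) (E i))) > 0" by blast
  qed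
qed

theorem proposition4p5:
  fixes Rc :: "'n::finite \<Rightarrow> 'n \<Rightarrow> 'n \<Rightarrow> 'n \<Rightarrow> complex"
    and k l :: nat
  assumes "kaehler_curvature Rc"
    and "1 \<le> k" and "k \<le> card (UNIV :: 'n set)"
  shows "(S_positive Rc k \<longrightarrow> (\<forall>p\<ge>k. BC_positive Rc p)) \<and>
         ((l \<le> k \<and> Ric_l_positive Rc k l) \<longrightarrow> (\<forall>p. l \<le> p \<and> p \<le> card (UNIV :: 'n set) \<longrightarrow> BC_positive Rc p))"
  using BC_positive_of_S_positive[OF assms(1,2)] BC_positive_of_Ric_l_positive[OF assms] by blast

end
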